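(* Let $p\in\mathbb{C}\setminus\{0\}$ and let $\mathcal{B}(p)$ be the Lie conformal algebra which is a free $\mathbb{C}[\partial]$-module with basis $\{L_i\mid i\in\mathbb{Z}_+\}$ and $\lambda$-brackets $[L_i\,{}_\lambda\,L_j]=((i+p)\partial+(i+j+2p)\lambda)L_{i+j}$. Put $L_{i,m}=(L_i)_{(m+1)}$ for $i\in\mathbb{Z}_+$, $m\in\mathbb{Z}_{\ge -1}$. Then: (1) The annihilation algebra $\mathcal{A}(\mathcal{B}(p))$ is spanned over $\mathbb{C}$ by $\{L_{i,m}\mid i\in\mathbb{Z}_+,\ m\in\mathbb{Z}_{\ge-1}\}$ with relations $[L_{i,m},L_{j,n}]=((j+p)(m+1)-(i+p)(n+1))L_{i+j,m+n}$. (2) The extended annihilation algebra $\mathcal{A}(\mathcal{B}(p))^e$ is spanned over $\mathbb{C}$ by $\{L_{i,m},T\mid i\in\mathbb{Z}_+,\ m\in\mathbb{Z}_{\ge-1}\}$ with the relations in (1) and $[T,L_{i,m}]=-(m+1)L_{i,m-1}$.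
   Context: $\mathbb{Z}_+=\{0,1,2,\dots\}$. A Lie conformal algebra $R$ is a $\mathbb{C}[\partial]$-module with a $\mathbb{C}$-linear $\lambda$-bracket $R\otimes R\to\mathbb{C}[\lambda]\otimes R$ satisfying conformal sesquilinearity $[\partial a\,{}_\lambda\,b]=-\lambda[a\,{}_\lambda\,b]$, $[a\,{}_\lambda\,\partial b]=(\partial+\lambda)[a\,{}_\lambda\,b]$, skew-symmetry $[a\,{}_\lambda\,b]=-[b\,{}_{-\lambda-\partial}\,a]$, and the Jacobi identity $[a\,{}_\lambda\,[b\,{}_\mu\,c]]=[[a\,{}_\lambda\,b]\,{}_{\lambda+\mu}\,c]+[b\,{}_\mu\,[a\,{}_\lambda\,c]]$. Writing $[a\,{}_\lambda\,b]=\sum_{k\in\mathbb{Z}_+}\frac{\lambda^k}{k!}a_{(k)}b$, the annihilation algebra $\mathcal{A}(R)$ is the Lie algebra spanned by symbols $a_{(n)}$ ($a\in R$, $n\in\mathbb{Z}_+$), linear in $a$, with relations $[a_{(m)},b_{(n)}]=\sum_{k\in\mathbb{Z}_+}\binom{m}{k}(a_{(k)}b)_{(m+n-k)}$ and $(\partial a)_{(n)}=-na_{(n-1)}$. The extended annihilation algebra is $\mathcal{A}(R)^e=\mathbb{C}T\ltimes\mathcal{A}(R)$ with $[T,a_{(n)}]=-na_{(n-1)}$. *)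

theory Defs
  imports Complex_Main "HOL-Computational_Algebra.Polynomial"
begin

text \<open>An element of the free C[d]-module with basis
  L_0, L_1, ... is represented by a finitely supported function
  a :: nat => complex poly, where a i is the polynomial f(d) with the summand f(d) L_i.\<close>

type_synonym Bel = "nat \<Rightarrow> complex poly"

definition Bset :: "Bel set" where
  "Bset = {a. finite {i. a i \<noteq> 0}}"

definition Badd :: "Bel \<Rightarrow> Bel \<Rightarrow> Bel" where
  "Badd a b = (\<lambda>i. a i + b i)"

definition Bscale :: "complex \<Rightarrow> Bel \<Rightarrow> Bel" where
  "Bscale c a = (\<lambda>i. smult c (a i))"

definition Bder :: "Bel \<Rightarrow> Bel" where
  "Bder a = (\<lambda>i. [:0, 1:] * a i)"

definition Lb :: "nat \<Rightarrow> Bel" where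
  "Lb i = (\<lambda>j. if j = i then 1 else 0)"

text \<open>A coefficient is an element of
  (C[d])[lambda], i.e. of type complex poly poly, outer variable lambda, inner variable d.
  By conformal sesquilinearity,
  [f(d) L_i _lambda g(d) L_j] = f(-lambda) g(lambda+d) ((i+p) d + (i+j+2p) lambda) L_(i+j).\<close>
definition lam_term :: "complex \<Rightarrow> nat \<Rightarrow> nat \<Rightarrow> complex poly \<Rightarrow> complex poly \<Rightarrow> complex poly poly" where
  "lam_term p i j f g =
     map_poly (\<lambda>c. [:c:]) (pcompose f [:0, -1:])
     * pcompose (map_poly (\<lambda>c. [:c:]) g) [:[:0, 1:], 1:]
     * [: [:0, of_nat i + p:], [:of_nat (i + j) + 2 * p:] :]"

definition lam_bracket :: "complex \<Rightarrow> Bel \<Rightarrow> Bel \<Rightarrow> nat \<Rightarrow> complex poly poly" where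
  "lam_bracket p a b n = (\<Sum>i\<le>n. lam_term p i (n - i) (a i) (b (n - i)))"

text \<open>the k-th product a_(k) b, from [a _lambda b] = sum_k lambda^k/k! a_(k) b\<close>
definition nprod :: "complex \<Rightarrow> nat \<Rightarrow> Bel \<Rightarrow> Bel \<Rightarrow> Bel" where
  "nprod p k a b = (\<lambda>n. smult (fact k) (coeff (lam_bracket p a b n) k))"

definition lie_algebra :: "(complex \<Rightarrow> 'g::ab_group_add \<Rightarrow> 'g) \<Rightarrow> ('g \<Rightarrow> 'g \<Rightarrow> 'g) \<Rightarrow> bool" where
  "lie_algebra sc br \<longleftrightarrow>
     vector_space sc
     \<and> (\<forall>x y z. br (x + y) z = br x z + br y z)
     \<and> (\<forall>c x y. br (sc c x) y = sc c (br x y))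
     \<and> (\<forall>x. br x x = 0)
     \<and> (\<forall>x y z. br x (br y z) + br y (br z x) + br z (br x y) = 0)"

text \<open>The defining relations of the annihilation algebra A(B(p)): phi a n stands for the
  symbol a_(n); it is linear in a, satisfies (d a)_(n) = -n a_(n-1), and the commutator
  formula.\<close>
definition ann_relations ::
  "complex \<Rightarrow> (complex \<Rightarrow> 'g::ab_group_add \<Rightarrow> 'g) \<Rightarrow> ('g \<Rightarrow> 'g \<Rightarrow> 'g) \<Rightarrow> (Bel \<Rightarrow> nat \<Rightarrow> 'g) \<Rightarrow> bool" where
  "ann_relations p sc br \<phi> \<longleftrightarrow>
     lie_algebra sc br
     \<and> (\<forall>a\<in>Bset. \<forall>b\<in>Bset. \<forall>n. \<phi> (Badd a b) n = \<phi> a n + \<phi> b n)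
     \<and> (\<forall>c. \<forall>a\<in>Bset. \<forall>n. \<phi> (Bscale c a) n = sc c (\<phi> a n))
     \<and> (\<forall>a\<in>Bset. \<forall>n. \<phi> (Bder a) n = sc (- of_nat n) (\<phi> a (n - 1)))
     \<and> (\<forall>a\<in>Bset. \<forall>b\<in>Bset. \<forall>m n.
           br (\<phi> a m) (\<phi> b n) = (\<Sum>k\<le>m. sc (of_nat (m choose k)) (\<phi> (nprod p k a b) (m + n - k))))"

definition is_ann_algebra ::
  "complex \<Rightarrow> (complex \<Rightarrow> 'g::ab_group_add \<Rightarrow> 'g) \<Rightarrow> ('g \<Rightarrow> 'g \<Rightarrow> 'g) \<Rightarrow> (Bel \<Rightarrow> nat \<Rightarrow> 'g) \<Rightarrow> bool" where
  "is_ann_algebra p sc br \<phi> \<longleftrightarrow>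
     ann_relations p sc br \<phi> \<and> module.span sc {\<phi> a n |a n. a \<in> Bset} = UNIV"

definition is_ext_ann_algebra ::
  "complex \<Rightarrow> (complex \<Rightarrow> 'g::ab_group_add \<Rightarrow> 'g) \<Rightarrow> ('g \<Rightarrow> 'g \<Rightarrow> 'g) \<Rightarrow> (Bel \<Rightarrow> nat \<Rightarrow> 'g) \<Rightarrow> 'g \<Rightarrow> bool" where
  "is_ext_ann_algebra p sc br \<phi> T \<longleftrightarrow>
     ann_relations p sc br \<phi>
     \<and> (\<forall>a\<in>Bset. \<forall>n. br T (\<phi> a n) = sc (- of_nat n) (\<phi> a (n - 1)))
     \<and> module.span sc (insert T {\<phi> a n |a n. a \<in> Bset}) = UNIV"

text \<open>L_(i,m) = (L_i)_(m+1) for m \<ge> -1 (m an integer).  For m < -1 the index is clamped to 0;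
  this only occurs in the formulas with coefficient 0.\<close>
definition Lim :: "(Bel \<Rightarrow> nat \<Rightarrow> 'g) \<Rightarrow> nat \<Rightarrow> int \<Rightarrow> 'g" where
  "Lim \<phi> i m = \<phi> (Lb i) (nat (m + 1))"

end

theory Submission
  imports Defs
begin

text \<open>Since [L_i \<lambda> L_j] = ((i+p)\<partial> + (i+j+2p)\<lambda>) L_(i+j), the only nonzero products
  are (L_i)_(0) L_j = (i+p) \<partial>L_(i+j) and (L_i)_(1) L_j = (i+j+2p) L_(i+j); the commutator formula
  together with (\<partial>a)_(n) = -n a_(n-1) then gives the stated brackets after the shift
  L_(i,m) = (L_i)_(m+1). Spanning holds because every element of B(p) is built from the L_i
  by addition, scaling and \<partial>, and \<partial> only moves a symbol one index down.\<close>

lemma Lb_in_Bset: "Lb i \<in> Bset"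
  by (simp add: Bset_def Lb_def)

lemma zero_in_Bset: "(\<lambda>n. 0) \<in> Bset"
  by (simp add: Bset_def)

lemma Bder_in_Bset: "a \<in> Bset \<Longrightarrow> Bder a \<in> Bset"
  unfolding Bset_def Bder_def by (auto elim: finite_subset[rotated])

lemma Bscale_in_Bset: "a \<in> Bset \<Longrightarrow> Bscale c a \<in> Bset"
  unfolding Bset_def Bscale_def by (auto elim: finite_subset[rotated])

definition Bsingle :: "nat \<Rightarrow> complex poly \<Rightarrow> Bel" where
  "Bsingle i f = (\<lambda>j. if j = i then f else 0)"

lemma Bsingle_in_Bset: "Bsingle i f \<in> Bset"
  by (simp add: Bset_def Bsingle_def finite_subset[of _ "{i}"])

lemma Bsingle_pCons: "Bsingle i (pCons c f) = Badd (Bscale c (Lb i)) (Bder (Bsingle i f))"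
  by (auto simp: fun_eq_iff Bsingle_def Badd_def Bscale_def Bder_def Lb_def)

lemma lam_bracket_Lb:
  "lam_bracket p (Lb i) (Lb j) n =
     (if n = i + j then [: [:0, of_nat i + p:], [:of_nat (i + j) + 2 * p:] :] else 0)"
proof -
  have "lam_term p i' (n - i') (Lb i i') (Lb j (n - i')) =
          (if i' = i \<and> n = i + j then [: [:0, of_nat i + p:], [:of_nat (i + j) + 2 * p:] :] else 0)"
    if "i' \<le> n" for i'
    using that by (auto simp: Lb_def lam_term_def pcompose_1)
  then show ?thesis
    unfolding lam_bracket_def by (simp add: sum.If_cases)
qed

lemma nprod_Lb_0: "nprod p 0 (Lb i) (Lb j) = Bscale (of_nat i + p) (Bder (Lb (i + j)))"
  by (simp add: fun_eq_iff nprod_def lam_bracket_Lb Bscale_def Bder_def) (simp add: Lb_def)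

lemma nprod_Lb_1: "nprod p 1 (Lb i) (Lb j) = Bscale (of_nat (i + j) + 2 * p) (Lb (i + j))"
  by (simp add: fun_eq_iff nprod_def lam_bracket_Lb Bscale_def) (simp add: Lb_def)

lemma nprod_Lb_eq_zero: "k \<ge> 2 \<Longrightarrow> nprod p k (Lb i) (Lb j) = (\<lambda>n. 0)"
  by (auto simp: fun_eq_iff nprod_def lam_bracket_Lb coeff_pCons split: nat.split)

lemma Lim_set_eq: "{Lim \<phi> i m |i m. m \<ge> -1} = {\<phi> (Lb i) k |i k. True}"
proof -
  have "\<exists>m. k = nat (m + 1) \<and> m \<ge> -1" for k
    by (intro exI[of _ "int k - 1"]) simp
  then show ?thesis
    unfolding Lim_def by (auto, metis)
qed

locale annihilation_relations =
  fixes p :: complex and sc :: "complex \<Rightarrow> 'g::ab_group_add \<Rightarrow> 'g" and br :: "'g \<Rightarrow> 'g \<Rightarrow> 'g"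
    and \<phi> :: "Bel \<Rightarrow> nat \<Rightarrow> 'g"
  assumes relations: "ann_relations p sc br \<phi>"
begin

sublocale V: vector_space sc
  using relations by (simp add: ann_relations_def lie_algebra_def)

lemma \<phi>_Badd: "a \<in> Bset \<Longrightarrow> b \<in> Bset \<Longrightarrow> \<phi> (Badd a b) n = \<phi> a n + \<phi> b n"
  and \<phi>_Bscale: "a \<in> Bset \<Longrightarrow> \<phi> (Bscale c a) n = sc c (\<phi> a n)"
  and \<phi>_Bder: "a \<in> Bset \<Longrightarrow> \<phi> (Bder a) n = sc (- of_nat n) (\<phi> a (n - 1))"
  and \<phi>_bracket: "a \<in> Bset \<Longrightarrow> b \<in> Bset \<Longrightarrow>
     br (\<phi> a m) (\<phi> b n) = (\<Sum>k\<le>m. sc (of_nat (m choose k)) (\<phi> (nprod p k a b) (m + n - k)))"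
  using relations by (simp_all add: ann_relations_def)

lemma \<phi>_zero: "\<phi> (\<lambda>n. 0) n = 0"
proof -
  have "Badd (\<lambda>n. 0) (\<lambda>n. 0) = (\<lambda>n. 0)"
    by (simp add: Badd_def)
  then show ?thesis
    using \<phi>_Badd[OF zero_in_Bset zero_in_Bset, of n] by simp
qed

abbreviation Lb_symbols :: "'g set" where
  "Lb_symbols \<equiv> {\<phi> (Lb i) k |i k. True}"

lemma \<phi>_Bsingle_in_span: "\<phi> (Bsingle i f) n \<in> V.span Lb_symbols"
proof (induction f arbitrary: n rule: pCons_induct)
  case 0
  have "Bsingle i 0 = (\<lambda>n. 0)"
    by (simp add: Bsingle_def fun_eq_iff)
  then show ?case
    by (simp add: \<phi>_zero V.span_zero)
next
  case (pCons c f)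
  have "\<phi> (Bsingle i (pCons c f)) n = sc c (\<phi> (Lb i) n) + sc (- of_nat n) (\<phi> (Bsingle i f) (n - 1))"
    by (simp add: Bsingle_pCons \<phi>_Badd \<phi>_Bscale \<phi>_Bder Bscale_in_Bset Bder_in_Bset
        Lb_in_Bset Bsingle_in_Bset)
  also have "\<dots> \<in> V.span Lb_symbols"
    by (intro V.span_add V.span_scale pCons.IH) (auto intro: V.span_base)
  finally show ?case .
qed

lemma \<phi>_restrict_in_span:
  "finite A \<Longrightarrow> \<phi> (\<lambda>j. if j \<in> A then a j else 0) n \<in> V.span Lb_symbols"
proof (induction A arbitrary: n rule: finite_induct)
  case empty
  then show ?case
    by (simp add: \<phi>_zero V.span_zero)
next
  case (insert x A)
  have "(\<lambda>j. if j \<in> A then a j else 0) \<in> Bset"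
    using insert.hyps(1) by (simp add: Bset_def finite_subset[of _ A])
  moreover have "(\<lambda>j. if j \<in> insert x A then a j else 0)
                   = Badd (\<lambda>j. if j \<in> A then a j else 0) (Bsingle x (a x))"
    using insert.hyps by (auto simp: Badd_def Bsingle_def fun_eq_iff)
  ultimately show ?case
    using insert.IH \<phi>_Bsingle_in_span by (simp add: \<phi>_Badd Bsingle_in_Bset V.span_add)
qed

lemma \<phi>_in_span:
  assumes "a \<in> Bset"
  shows "\<phi> a n \<in> V.span Lb_symbols"
proof -
  have "(\<lambda>j. if j \<in> {i. a i \<noteq> 0} then a j else 0) = a"
    by auto
  then show ?thesis
    using \<phi>_restrict_in_span[of "{i. a i \<noteq> 0}" a n] assms by (simp add: Bset_def)
qed

lemma span_\<phi>_subset_span_Lim: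
  "V.span (S \<union> {\<phi> a n |a n. a \<in> Bset}) \<subseteq> V.span (S \<union> {Lim \<phi> i m |i m. m \<ge> -1})"
  unfolding Lim_set_eq
  using \<phi>_in_span V.span_mono[of Lb_symbols "S \<union> Lb_symbols"]
  by (intro V.span_minimal V.subspace_span) (auto intro: V.span_base)

lemma bracket_Lb:
  "br (\<phi> (Lb i) m) (\<phi> (Lb j) n) =
     sc ((of_nat j + p) * of_nat m - (of_nat i + p) * of_nat n) (\<phi> (Lb (i + j)) (m + n - 1))"
proof -
  let ?f = "\<lambda>k. sc (of_nat (m choose k)) (\<phi> (nprod p k (Lb i) (Lb j)) (m + n - k))"
  let ?g = "\<lambda>c. sc c (\<phi> (Lb (i + j)) (m + n - 1))"
  have "?f 0 = ?g (- (of_nat i + p) * of_nat (m + n))"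
    by (simp add: nprod_Lb_0 \<phi>_Bscale \<phi>_Bder Bder_in_Bset Lb_in_Bset algebra_simps)
  moreover have "?f 1 = ?g (of_nat m * (of_nat (i + j) + 2 * p))"
    unfolding nprod_Lb_1 by (simp add: \<phi>_Bscale Lb_in_Bset)
  moreover have "(\<Sum>k\<le>m. ?f k) = (\<Sum>k\<in>{0, 1}. ?f k)"
    by (rule sum.mono_neutral_cong) (auto simp: nprod_Lb_eq_zero \<phi>_zero)
  ultimately have "(\<Sum>k\<le>m. ?f k) = ?g (- (of_nat i + p) * of_nat (m + n) + of_nat m * (of_nat (i + j) + 2 * p))"
    by (simp add: V.scale_left_distrib)
  also have "\<dots> = ?g ((of_nat j + p) * of_nat m - (of_nat i + p) * of_nat n)"
    by (simp add: algebra_simps)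
  finally show ?thesis
    by (simp add: \<phi>_bracket Lb_in_Bset)
qed

lemma bracket_Lim:
  assumes "m \<ge> -1" "n \<ge> -1"
  shows "br (Lim \<phi> i m) (Lim \<phi> j n)
           = sc ((of_nat j + p) * of_int (m + 1) - (of_nat i + p) * of_int (n + 1))
                (Lim \<phi> (i + j) (m + n))"
proof -
  have "of_int (m + 1) = (of_nat (nat (m + 1)) :: complex)"
    and "of_int (n + 1) = (of_nat (nat (n + 1)) :: complex)"
    and "nat (m + n + 1) = nat (m + 1) + nat (n + 1) - 1"
    using assms by simp_all
  then show ?thesis
    unfolding Lim_def by (simp add: bracket_Lb add.assoc)
qed

end

lemma T_bracket_Lim:
  assumes "\<forall>a\<in>Bset. \<forall>n. br T (\<phi> a n) = sc (- of_nat n) (\<phi> a (n - 1))" and "m \<ge> -1"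
  shows "br T (Lim \<phi> i m) = sc (- of_int (m + 1)) (Lim \<phi> i (m - 1))"
proof -
  have "br T (Lim \<phi> i m) = sc (- of_nat (nat (m + 1))) (\<phi> (Lb i) (nat (m + 1) - 1))"
    using assms(1) Lb_in_Bset by (simp add: Lim_def)
  also have "\<dots> = sc (- of_int (m + 1)) (Lim \<phi> i (m - 1))"
  proof -
    have "nat (m + 1) - 1 = nat m"
      using assms(2) by linarith
    then show ?thesis
      using assms(2) by (simp add: Lim_def)
  qed
  finally show ?thesis .
qed

theorem lemma2p5:
  fixes p :: complex
    and sc :: "complex \<Rightarrow> 'g::ab_group_add \<Rightarrow> 'g" and br :: "'g \<Rightarrow> 'g \<Rightarrow> 'g"
    and \<phi> :: "Bel \<Rightarrow> nat \<Rightarrow> 'g"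
    and sc' :: "complex \<Rightarrow> 'h::ab_group_add \<Rightarrow> 'h" and br' :: "'h \<Rightarrow> 'h \<Rightarrow> 'h"
    and \<psi> :: "Bel \<Rightarrow> nat \<Rightarrow> 'h" and T :: 'h
  assumes "p \<noteq> 0"
  shows
    "(is_ann_algebra p sc br \<phi> \<longrightarrow>
        module.span sc {Lim \<phi> i m |i m. m \<ge> -1} = UNIV
      \<and> (\<forall>i j. \<forall>m n::int. m \<ge> -1 \<longrightarrow> n \<ge> -1 \<longrightarrow>
           br (Lim \<phi> i m) (Lim \<phi> j n)
             = sc ((of_nat j + p) * of_int (m + 1) - (of_nat i + p) * of_int (n + 1))
                  (Lim \<phi> (i + j) (m + n))))
   \<and> (is_ext_ann_algebra p sc' br' \<psi> T \<longrightarrow>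
        module.span sc' (insert T {Lim \<psi> i m |i m. m \<ge> -1}) = UNIV
      \<and> (\<forall>i j. \<forall>m n::int. m \<ge> -1 \<longrightarrow> n \<ge> -1 \<longrightarrow>
           br' (Lim \<psi> i m) (Lim \<psi> j n)
             = sc' ((of_nat j + p) * of_int (m + 1) - (of_nat i + p) * of_int (n + 1))
                   (Lim \<psi> (i + j) (m + n)))
      \<and> (\<forall>i. \<forall>m::int. m \<ge> -1 \<longrightarrow>
           br' T (Lim \<psi> i m) = sc' (- of_int (m + 1)) (Lim \<psi> i (m - 1))))"
proof (intro conjI impI allI)
  assume ann: "is_ann_algebra p sc br \<phi>"
  then interpret A: annihilation_relations p sc br \<phi>
    by unfold_locales (simp add: is_ann_algebra_def)
  show "A.V.span {Lim \<phi> i m |i m. m \<ge> -1} = UNIV"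
    using ann A.span_\<phi>_subset_span_Lim[of "{}"] by (auto simp: is_ann_algebra_def)
  show "br (Lim \<phi> i m) (Lim \<phi> j n)
          = sc ((of_nat j + p) * of_int (m + 1) - (of_nat i + p) * of_int (n + 1)) (Lim \<phi> (i + j) (m + n))"
    if "m \<ge> -1" "n \<ge> -1" for i j m n
    using that by (rule A.bracket_Lim)
next
  assume ext: "is_ext_ann_algebra p sc' br' \<psi> T"
  then interpret A: annihilation_relations p sc' br' \<psi>
    by unfold_locales (simp add: is_ext_ann_algebra_def)
  show "A.V.span (insert T {Lim \<psi> i m |i m. m \<ge> -1}) = UNIV"
    using ext A.span_\<phi>_subset_span_Lim[of "{T}"] by (auto simp: is_ext_ann_algebra_def)
  show "br' (Lim \<psi> i m) (Lim \<psi> j n)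
          = sc' ((of_nat j + p) * of_int (m + 1) - (of_nat i + p) * of_int (n + 1)) (Lim \<psi> (i + j) (m + n))"
    if "m \<ge> -1" "n \<ge> -1" for i j m n
    using that by (rule A.bracket_Lim)
  show "br' T (Lim \<psi> i m) = sc' (- of_int (m + 1)) (Lim \<psi> i (m - 1))" if "m \<ge> -1" for i m
    using ext that by (intro T_bracket_Lim) (auto simp: is_ext_ann_algebra_def)
qed

end
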